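(* Let $F,G:[0,T]\to\mathbb{R}^{D\times D}$ be continuous. Let $\Psi(t,s)$ be the transition matrix of $F$, i.e. $\partial_t\Psi(t,s)=F_t\Psi(t,s)$ with $\Psi(s,s)=I_D$. Let $u_0\in\mathbb{R}^D$ and let $\Sigma_0$ be symmetric positive semidefinite. Let $\Sigma_t$ solve $\frac{d\Sigma_t}{dt}=F_t\Sigma_t+\Sigma_tF_t^T+G_tG_t^T$ with initial value $\Sigma_0$, and let $p_t=\mathcal{N}(\Psi(t,0)u_0,\Sigma_t)$, the time-$t$ marginal of $du=F_tu\,dt+G_t\,dw$ with $p_0=\mathcal{N}(u_0,\Sigma_0)$. Then for all $s,t\in[0,T]$ at which $\Sigma_s$ and $\Sigma_t$ are invertible, every point $u(s)\in\mathbb{R}^D$, and every $u\in\mathbb{R}^D$, $$\nabla\log p_t(u)=\Sigma_t^{-1}\Psi(t,s)\Sigma_s\nabla\log p_s(u(s))-\Sigma_t^{-1}\big[u-\Psi(t,s)u(s)\big].$$ *)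

theory Defs
  imports "HOL-Analysis.Analysis"
begin

definition gaussian_density :: "real^'n \<Rightarrow> real^'n^'n \<Rightarrow> real^'n \<Rightarrow> real" where
  "gaussian_density m S u =
     (2 * pi) powr (- real CARD('n) / 2) * det S powr (-1/2)
     * exp (- (1/2) * ((u - m) \<bullet> (matrix_inv S *v (u - m))))"

definition grad :: "(real^'n \<Rightarrow> real) \<Rightarrow> real^'n \<Rightarrow> real^'n" where
  "grad f x = (THE g. (f has_derivative (\<lambda>h. g \<bullet> h)) (at x))"

end

(*
  For a Gaussian with symmetric invertible covariance S and mean m the score is
  S^-1 (m - u); here the mean at time t is Psi(t,0) u0. Hence Sigma_s grad log p_s (u(s))
  = Psi(s,0) u0 - u(s), and the identity reduces to the cocycle law
  Psi(t,0) = Psi(t,s) Psi(s,0) together with the symmetry of Sigma_t. Both follow from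
  uniqueness for linear matrix equations X' = A X + X B, applied to
  Psi(.,0) - Psi(.,s) Psi(s,0) and to Sigma - Sigma^T; uniqueness in turn is a Gronwall
  estimate for |X|^2.
*)

theory Submission
  imports Defs
begin

lemma gronwall_norm_sq_bounds:
  fixes X :: "real \<Rightarrow> 'a::real_inner"
  assumes "a \<le> b"
    and deriv: "\<And>x. x \<in> {a..b} \<Longrightarrow> (X has_vector_derivative D x) (at x within {a..b})"
    and growth: "\<And>x. x \<in> {a..b} \<Longrightarrow> norm (D x) \<le> K * norm (X x)"
  shows "norm (X b)^2 \<le> exp (2 * K * (b - a)) * norm (X a)^2"
    and "norm (X a)^2 \<le> exp (2 * K * (b - a)) * norm (X b)^2"
proof -
  \<comment> \<open>With \<open>\<sigma> = \<plusminus>1\<close>, \<open>\<sigma> |X x|\<^sup>2 exp (-2\<sigma>K(x-a))\<close> is nonincreasing; the two signs give the two directions of time.\<close>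
  have weighted: "\<sigma> * (norm (X b)^2 * exp (- 2 * \<sigma> * K * (b - a))) \<le> \<sigma> * norm (X a)^2"
    if "\<bar>\<sigma>\<bar> = 1" for \<sigma>
  proof -
    define g where "g x = (X x \<bullet> X x) * exp (- 2 * \<sigma> * K * (x - a))" for x
    define g' where "g' x = 2 * (X x \<bullet> D x - \<sigma> * K * (X x \<bullet> X x)) * exp (- 2 * \<sigma> * K * (x - a))" for x
    have "(g has_derivative (*) (g' x)) (at x within {a..b})" if "a \<le> x" "x \<le> b" for x
    proof -
      have "((\<lambda>x. X x \<bullet> X x) has_real_derivative 2 * (X x \<bullet> D x)) (at x within {a..b})"
        using bounded_bilinear.has_vector_derivative[OF bounded_bilinear_inner deriv deriv] that
        by (simp add: has_real_derivative_iff_has_vector_derivative inner_commute)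
      then have "(g has_real_derivative g' x) (at x within {a..b})"
        unfolding g_def g'_def by (auto intro!: derivative_eq_intros simp: algebra_simps)
      then show ?thesis by (simp add: has_field_derivative_def)
    qed
    from mvt_very_simple[OF \<open>a \<le> b\<close> this]
    obtain \<xi> where \<xi>: "\<xi> \<in> {a..b}" "g b - g a = g' \<xi> * (b - a)" by blast
    have "\<sigma> * (X \<xi> \<bullet> D \<xi>) \<le> norm (X \<xi>) * norm (D \<xi>)"
      using Cauchy_Schwarz_ineq2[of "X \<xi>" "D \<xi>"] that by (auto simp: abs_le_iff abs_if split: if_splits)
    also have "\<dots> \<le> K * (X \<xi> \<bullet> X \<xi>)"
      using mult_left_mono[OF growth[OF \<xi>(1)] norm_ge_zero[of "X \<xi>"]]
      by (simp add: power2_norm_eq_inner[symmetric] power2_eq_square mult_ac)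
    finally have "\<sigma> * g' \<xi> \<le> 0"
      using that unfolding g'_def by (auto simp: abs_if mult_nonpos_nonneg split: if_splits)
    then have "\<sigma> * (g b - g a) \<le> 0"
      using \<xi>(2) \<open>a \<le> b\<close> by (simp add: mult_nonpos_nonneg mult.assoc[symmetric])
    then show ?thesis
      by (simp add: g_def power2_norm_eq_inner algebra_simps)
  qed
  show "norm (X b)^2 \<le> exp (2 * K * (b - a)) * norm (X a)^2"
    using mult_left_mono[OF weighted[of 1], of "exp (2 * K * (b - a))"]
    by (simp add: mult.left_commute[of _ "norm (X b)^2"] exp_minus_inverse)
  show "norm (X a)^2 \<le> exp (2 * K * (b - a)) * norm (X b)^2"
    using weighted[of "-1"] by (simp add: mult_ac)
qed

lemma linear_growth_solution_vanishes:
  fixes X :: "real \<Rightarrow> 'a::real_inner"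
  assumes deriv: "\<And>x. x \<in> {a..b} \<Longrightarrow> (X has_vector_derivative D x) (at x within {a..b})"
    and growth: "\<And>x. x \<in> {a..b} \<Longrightarrow> norm (D x) \<le> K * norm (X x)"
    and s: "s \<in> {a..b}" and "X s = 0" and r: "r \<in> {a..b}"
  shows "X r = 0"
proof -
  let ?I = "{min r s..max r s}"
  have "?I \<subseteq> {a..b}" using r s by auto
  then have "(X has_vector_derivative D x) (at x within ?I)" "norm (D x) \<le> K * norm (X x)"
    if "x \<in> ?I" for x
    using that deriv growth by (blast intro: has_vector_derivative_within_subset)+
  from gronwall_norm_sq_bounds[of "min r s" "max r s", OF _ this]
  have "norm (X r)^2 \<le> exp (2 * K * (max r s - min r s)) * norm (X s)^2"
    by (cases "s \<le> r") (auto simp: max_def min_def)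
  then show ?thesis using \<open>X s = 0\<close> by simp
qed

lemma bounded_bilinear_matrix_matrix_mult:
  "bounded_bilinear (\<lambda>(A::real^'n^'m) (B::real^'k^'n). A ** B)"
  unfolding bilinear_conv_bounded_bilinear[symmetric] bilinear_def linear_iff
  by (simp add: vec_eq_iff matrix_matrix_mult_def sum.distrib sum_distrib_left algebra_simps)

lemma bounded_linear_transpose: "bounded_linear (transpose :: real^'n^'m \<Rightarrow> real^'m^'n)"
  unfolding linear_conv_bounded_linear[symmetric] linear_iff
  by (simp add: transpose_def vec_eq_iff)

lemma matrix_linear_ode_solution_vanishes:
  fixes A :: "real \<Rightarrow> real^'n^'n" and B :: "real \<Rightarrow> real^'m^'m" and X :: "real \<Rightarrow> real^'m^'n"
  assumes contA: "continuous_on {a..b} A" and contB: "continuous_on {a..b} B"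
    and deriv: "\<And>x. x \<in> {a..b} \<Longrightarrow>
        (X has_vector_derivative A x ** X x + X x ** B x) (at x within {a..b})"
    and s: "s \<in> {a..b}" and "X s = 0" and r: "r \<in> {a..b}"
  shows "X r = 0"
proof -
  obtain K L where "K > 0" "L > 0"
    and K: "\<And>(P::real^'n^'n) (Y::real^'m^'n). norm (P ** Y) \<le> norm P * norm Y * K"
    and L: "\<And>(Y::real^'m^'n) (Q::real^'m^'m). norm (Y ** Q) \<le> norm Y * norm Q * L"
    using bounded_bilinear.pos_bounded[OF bounded_bilinear_matrix_matrix_mult] by metis
  obtain MA MB where MA: "\<And>x. x \<in> {a..b} \<Longrightarrow> norm (A x) \<le> MA"
    and MB: "\<And>x. x \<in> {a..b} \<Longrightarrow> norm (B x) \<le> MB"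
    using compact_imp_bounded[OF compact_continuous_image[OF contA compact_Icc]]
      compact_imp_bounded[OF compact_continuous_image[OF contB compact_Icc]]
    unfolding bounded_iff by (metis imageI)
  have growth: "norm (A x ** X x + X x ** B x) \<le> (MA * K + MB * L) * norm (X x)" if "x \<in> {a..b}" for x
  proof -
    have "norm (A x ** X x + X x ** B x) \<le> norm (A x) * norm (X x) * K + norm (X x) * norm (B x) * L"
      using norm_triangle_le[OF add_mono[OF K L]] .
    also have "\<dots> \<le> MA * norm (X x) * K + norm (X x) * MB * L"
      using MA[OF that] MB[OF that] \<open>K > 0\<close> \<open>L > 0\<close>
      by (intro add_mono mult_right_mono mult_left_mono) auto
    finally show ?thesis by (simp add: algebra_simps)
  qed
  from linear_growth_solution_vanishes[OF deriv growth s \<open>X s = 0\<close> r] show ?thesis .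
qed

lemma transition_matrix_cocycle:
  fixes F :: "real \<Rightarrow> real^'n^'n" and Psi :: "real \<Rightarrow> real \<Rightarrow> real^'n^'n"
  assumes contF: "continuous_on {a..b} F"
    and Psi_deriv: "\<And>s t. s \<in> {a..b} \<Longrightarrow> t \<in> {a..b} \<Longrightarrow>
        ((\<lambda>r. Psi r s) has_vector_derivative (F t ** Psi t s)) (at t within {a..b})"
    and Psi_init: "\<And>s. s \<in> {a..b} \<Longrightarrow> Psi s s = mat 1"
    and r: "r \<in> {a..b}" and s: "s \<in> {a..b}" and t: "t \<in> {a..b}"
  shows "Psi t r = Psi t s ** Psi s r"
proof -
  let ?Y = "\<lambda>x. Psi x r - Psi x s ** Psi s r"
  \<comment> \<open>\<open>?Y' = F ?Y\<close>, written in the shape \<open>X' = A X + X B\<close> with \<open>B = 0\<close>\<close>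
  have "(?Y has_vector_derivative F x ** ?Y x + ?Y x ** 0) (at x within {a..b})"
    if x: "x \<in> {a..b}" for x
  proof -
    have "((\<lambda>x. Psi x s ** Psi s r) has_vector_derivative (F x ** Psi x s) ** Psi s r) (at x within {a..b})"
      using bounded_linear.has_vector_derivative[OF
          bounded_bilinear.bounded_linear_left[OF bounded_bilinear_matrix_matrix_mult] Psi_deriv[OF s x]] .
    from has_vector_derivative_diff[OF Psi_deriv[OF r x] this] show ?thesis
      by (simp add: bounded_bilinear.diff_right[OF bounded_bilinear_matrix_matrix_mult] matrix_mul_assoc)
  qed
  moreover have "?Y s = 0" by (simp add: Psi_init[OF s])
  ultimately have "?Y t = 0"
    using matrix_linear_ode_solution_vanishes[OF contF continuous_on_const] s t by blast
  then show ?thesis by simp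
qed

lemma lyapunov_solution_symmetric:
  fixes F Q Sigma :: "real \<Rightarrow> real^'n^'n"
  assumes contF: "continuous_on {a..b} F"
    and Q_sym: "\<And>x. x \<in> {a..b} \<Longrightarrow> transpose (Q x) = Q x"
    and Sigma_deriv: "\<And>x. x \<in> {a..b} \<Longrightarrow>
        (Sigma has_vector_derivative F x ** Sigma x + Sigma x ** transpose (F x) + Q x) (at x within {a..b})"
    and s: "s \<in> {a..b}" and Sigma_s_sym: "transpose (Sigma s) = Sigma s" and r: "r \<in> {a..b}"
  shows "transpose (Sigma r) = Sigma r"
proof -
  let ?Z = "\<lambda>x. Sigma x - transpose (Sigma x)"
  have contFT: "continuous_on {a..b} (\<lambda>x. transpose (F x))"
    using bounded_linear.continuous_on[OF bounded_linear_transpose contF] .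
  have Z_deriv: "(?Z has_vector_derivative F x ** ?Z x + ?Z x ** transpose (F x)) (at x within {a..b})"
    if x: "x \<in> {a..b}" for x
    using has_vector_derivative_diff[OF Sigma_deriv[OF x]
        bounded_linear.has_vector_derivative[OF bounded_linear_transpose Sigma_deriv[OF x]]]
    by (simp add: bounded_bilinear.diff_left[OF bounded_bilinear_matrix_matrix_mult]
        bounded_bilinear.diff_right[OF bounded_bilinear_matrix_matrix_mult]
        linear_add[OF bounded_linear.linear[OF bounded_linear_transpose]]
        matrix_transpose_mul Q_sym[OF x] algebra_simps)
  have "?Z s = 0" using Sigma_s_sym by simp
  from matrix_linear_ode_solution_vanishes[OF contF contFT Z_deriv s this r]
  have "?Z r = 0" .
  then show ?thesis by simp
qed

lemma matrix_inv_inverse: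
  fixes A :: "real^'n^'n"
  assumes "invertible A"
  shows "A ** matrix_inv A = mat 1" and "matrix_inv A ** A = mat 1"
proof -
  from assms obtain B :: "real^'n^'n" where "A ** B = mat 1 \<and> B ** A = mat 1"
    unfolding invertible_def by blast
  then have "A ** matrix_inv A = mat 1 \<and> matrix_inv A ** A = mat 1"
    unfolding matrix_inv_def by (rule someI)
  then show "A ** matrix_inv A = mat 1" and "matrix_inv A ** A = mat 1" by auto
qed

lemma symmetric_matrix_inv:
  fixes S :: "real^'n^'n"
  assumes "invertible S" and "transpose S = S"
  shows "transpose (matrix_inv S) = matrix_inv S"
proof -
  have left_inv: "transpose (matrix_inv S) ** S = mat 1"
    by (metis assms(2) matrix_inv_inverse(1)[OF assms(1)] matrix_transpose_mul transpose_mat)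
  have "transpose (matrix_inv S) = transpose (matrix_inv S) ** (S ** matrix_inv S)"
    by (simp add: matrix_inv_inverse(1)[OF assms(1)])
  also have "\<dots> = matrix_inv S"
    by (simp add: matrix_mul_assoc left_inv)
  finally show ?thesis .
qed

lemma grad_eqI:
  assumes "(f has_derivative (\<lambda>h. g \<bullet> h)) (at x)"
  shows "grad f x = g"
  unfolding grad_def
proof (rule the_equality)
  fix g' assume "(f has_derivative (\<lambda>h. g' \<bullet> h)) (at x)"
  from has_derivative_unique[OF this assms] have "(g' - g) \<bullet> h = 0" for h
    by (metis inner_diff_left right_minus_eq)
  then show "g' = g"
    using inner_eq_zero_iff right_minus_eq by blast
qed (fact assms)

lemma has_derivative_quadratic_form:
  fixes A :: "real^'n^'n"
  shows "((\<lambda>v. (v - m) \<bullet> (A *v (v - m))) has_derivative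
           (\<lambda>h. ((A + transpose A) *v (u - m)) \<bullet> h)) (at u)"
proof -
  have "((\<lambda>v. (v - m) \<bullet> (A *v (v - m))) has_derivative
          (\<lambda>h. (u - m) \<bullet> (A *v h) + h \<bullet> (A *v (u - m)))) (at u)"
    by (auto intro!: derivative_eq_intros bounded_linear.has_derivative[OF matrix_vector_mul_bounded_linear])
  moreover have "(u - m) \<bullet> (A *v h) + h \<bullet> (A *v (u - m)) = ((A + transpose A) *v (u - m)) \<bullet> h" for h
  proof -
    have "(u - m) \<bullet> (A *v h) = (transpose A *v (u - m)) \<bullet> h"
      by (simp add: dot_lmul_matrix)
    moreover have "h \<bullet> (A *v (u - m)) = (A *v (u - m)) \<bullet> h"
      by (rule inner_commute)
    ultimately show ?thesis
      by (simp only: matrix_vector_mult_add_rdistrib inner_add_left add.commute)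
  qed
  ultimately show ?thesis by simp
qed

lemma grad_ln_gaussian_density:
  fixes S :: "real^'n^'n"
  assumes inv: "invertible S" and sym: "transpose S = S"
  shows "grad (\<lambda>v. ln (gaussian_density m S v)) u = matrix_inv S *v (m - u)"
proof -
  let ?A = "matrix_inv S"
  define c where "c = (2 * pi) powr (- real CARD('n) / 2) * det S powr (-1/2)"
  have "det S \<noteq> 0"
    using invertible_det_nz inv by blast
  then have "c > 0" unfolding c_def by simp
  with \<open>det S \<noteq> 0\<close> have ln_density: "(\<lambda>v. ln (gaussian_density m S v))
      = (\<lambda>v. ln c - (1/2) * ((v - m) \<bullet> (?A *v (v - m))))"
    by (simp add: gaussian_density_def c_def ln_mult fun_eq_iff)
  have "((\<lambda>v. ln c - (1/2) * ((v - m) \<bullet> (?A *v (v - m)))) has_derivative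
      (\<lambda>h. 0 - (1/2) * (((?A + transpose ?A) *v (u - m)) \<bullet> h))) (at u)"
    by (intro derivative_intros has_derivative_quadratic_form)
  moreover have "0 - (1/2) * (((?A + transpose ?A) *v (u - m)) \<bullet> h) = (?A *v (m - u)) \<bullet> h" for h
    by (simp only: symmetric_matrix_inv[OF inv sym] matrix_vector_mult_add_rdistrib inner_add_left)
      (simp add: matrix_vector_mult_diff_distrib inner_diff_left field_simps)
  ultimately have "((\<lambda>v. ln c - (1/2) * ((v - m) \<bullet> (?A *v (v - m)))) has_derivative
      (\<lambda>h. (?A *v (m - u)) \<bullet> h)) (at u)"
    by simp
  then show ?thesis
    unfolding ln_density by (rule grad_eqI)
qed

theorem proposition5:
  fixes T :: real
    and F G :: "real \<Rightarrow> real^'n^'n"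
    and Psi :: "real \<Rightarrow> real \<Rightarrow> real^'n^'n"
    and Sigma :: "real \<Rightarrow> real^'n^'n"
    and u0 :: "real^'n"
    and p :: "real \<Rightarrow> real^'n \<Rightarrow> real"
  assumes contF: "continuous_on {0..T} F"
    and contG: "continuous_on {0..T} G"
    and Psi_deriv: "\<And>s t. s \<in> {0..T} \<Longrightarrow> t \<in> {0..T} \<Longrightarrow>
        ((\<lambda>r. Psi r s) has_vector_derivative (F t ** Psi t s)) (at t within {0..T})"
    and Psi_init: "\<And>s. s \<in> {0..T} \<Longrightarrow> Psi s s = mat 1"
    and Sigma0_sym: "transpose (Sigma 0) = Sigma 0"
    and Sigma0_psd: "\<And>x. 0 \<le> x \<bullet> (Sigma 0 *v x)"
    and Sigma_deriv: "\<And>t. t \<in> {0..T} \<Longrightarrow>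
        (Sigma has_vector_derivative
           (F t ** Sigma t + Sigma t ** transpose (F t) + G t ** transpose (G t))) (at t within {0..T})"
    and p_def: "\<And>t. p t = gaussian_density (Psi t 0 *v u0) (Sigma t)"
    and s_in: "s \<in> {0..T}" and t_in: "t \<in> {0..T}"
    and inv_s: "invertible (Sigma s)" and inv_t: "invertible (Sigma t)"
  shows "grad (\<lambda>v. ln (p t v)) u =
           matrix_inv (Sigma t) *v (Psi t s *v (Sigma s *v grad (\<lambda>v. ln (p s v)) us))
           - matrix_inv (Sigma t) *v (u - Psi t s *v us)"
proof -
  have "0 \<in> {0..T}" using s_in by simp
  have Sigma_sym: "transpose (Sigma r) = Sigma r" if "r \<in> {0..T}" for r
    using lyapunov_solution_symmetric[OF contF _ Sigma_deriv \<open>0 \<in> {0..T}\<close> Sigma0_sym that]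
    by (simp add: matrix_transpose_mul)
  have score_t: "grad (\<lambda>v. ln (p t v)) u = matrix_inv (Sigma t) *v (Psi t 0 *v u0 - u)"
    unfolding p_def by (rule grad_ln_gaussian_density[OF inv_t Sigma_sym[OF t_in]])
  have score_s: "grad (\<lambda>v. ln (p s v)) us = matrix_inv (Sigma s) *v (Psi s 0 *v u0 - us)"
    unfolding p_def by (rule grad_ln_gaussian_density[OF inv_s Sigma_sym[OF s_in]])
  have "Sigma s *v grad (\<lambda>v. ln (p s v)) us = Psi s 0 *v u0 - us"
    by (simp add: score_s matrix_vector_mul_assoc matrix_inv_inverse(1)[OF inv_s])
  moreover have "Psi t 0 = Psi t s ** Psi s 0"
    by (rule transition_matrix_cocycle[OF contF Psi_deriv Psi_init \<open>0 \<in> {0..T}\<close> s_in t_in])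
  ultimately have "Psi t s *v (Sigma s *v grad (\<lambda>v. ln (p s v)) us) = Psi t 0 *v u0 - Psi t s *v us"
    by (simp add: matrix_vector_mult_diff_distrib matrix_vector_mul_assoc)
  then show ?thesis
    unfolding score_t by (simp add: matrix_vector_mult_diff_distrib[symmetric])
qed

end
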